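(* Let $\alpha\in[0,2]$ and consider $\mathcal{B}_\alpha(6,3)$. Let $S_a=\{(2,2,2)',(3,3,0)',(3,0,3)',(0,3,3)',(4,1,1)',(1,4,1)',(1,1,4)'\}$ and $S_b=\{(4,2,0)',(4,0,2)',(2,4,0)',(2,0,4)',(0,4,2)',(0,2,4)'\}$, and let $\sigma$ be the mixed strategy with $\sigma(s)=1/10$ for $s\in S_a$, $\sigma(s)=1/20$ for $s\in S_b$, and $\sigma(s)=0$ otherwise. Then $\sigma$ induces uniform marginals (each battlefield's bid is uniform on $\{0,1,2,3,4\}$) and $\sigma$ is a symmetric equilibrium strategy of $\mathcal{B}_\alpha(6,3)$.
   Context: Fix integers $N\ge1$, $K\ge2$ and a real number $\alpha$. The Colonel Blotto game $\mathcal{B}_\alpha(N,K)$ is the two-player simultaneous-move game with players $A,B$, each with pure strategy set $S=\{s\in\{0,1,\ldots,N\}^K:\sum_{k=1}^K s_k=N\}$, in which the payoff of player $i$ at the pure profile $(s^i,s^{-i})$ is $\pi^i(s^i,s^{-i})=\sum_{k=1}^K\big(\mathbf 1[s^i_k>s^{-i}_k]+\tfrac{\alpha}{2}\mathbf 1[s^i_k=s^{-i}_k]\big)$. Mixed strategies are probability distributions on $S$, with expected payoffs under independent randomization. A symmetric equilibrium strategy is a mixed strategy $\sigma$ such that $(\sigma,\sigma)$ is a Nash equilibrium. When $K$ divides $N$ and $m=N/K$, $\sigma$ induces uniform marginals if for every battlefield $k$ the distribution of $s_k$ under $s\sim\sigma$ is uniform on $\{0,1,\ldots,2m\}$. *)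

theory Defs
  imports Complex_Main
begin

text \<open>Pure strategies of the Colonel Blotto game B_alpha(N,K): vectors in {0..N}^K
  summing to N, represented as lists of length K (battlefield k is index k, 0-based).\<close>
definition blotto_strats :: "nat \<Rightarrow> nat \<Rightarrow> nat list set" where
  "blotto_strats N K = {s. length s = K \<and> (\<forall>k<K. s ! k \<le> N) \<and> sum_list s = N}"

definition blotto_payoff :: "real \<Rightarrow> nat \<Rightarrow> nat list \<Rightarrow> nat list \<Rightarrow> real" where
  "blotto_payoff \<alpha> K s t =
     (\<Sum>k<K. (if s ! k > t ! k then 1 else 0) + \<alpha> / 2 * (if s ! k = t ! k then 1 else 0))"

definition mixed_strategy :: "nat \<Rightarrow> nat \<Rightarrow> (nat list \<Rightarrow> real) \<Rightarrow> bool" where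
  "mixed_strategy N K \<sigma> \<longleftrightarrow>
     (\<forall>s. 0 \<le> \<sigma> s) \<and> (\<forall>s. s \<notin> blotto_strats N K \<longrightarrow> \<sigma> s = 0) \<and>
     (\<Sum>s\<in>blotto_strats N K. \<sigma> s) = 1"

definition expected_payoff ::
  "real \<Rightarrow> nat \<Rightarrow> nat \<Rightarrow> (nat list \<Rightarrow> real) \<Rightarrow> (nat list \<Rightarrow> real) \<Rightarrow> real" where
  "expected_payoff \<alpha> N K \<sigma> \<tau> =
     (\<Sum>s\<in>blotto_strats N K. \<Sum>t\<in>blotto_strats N K. \<sigma> s * \<tau> t * blotto_payoff \<alpha> K s t)"

definition nash_equilibrium ::
  "real \<Rightarrow> nat \<Rightarrow> nat \<Rightarrow> (nat list \<Rightarrow> real) \<Rightarrow> (nat list \<Rightarrow> real) \<Rightarrow> bool" where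
  "nash_equilibrium \<alpha> N K \<sigma>A \<sigma>B \<longleftrightarrow>
     mixed_strategy N K \<sigma>A \<and> mixed_strategy N K \<sigma>B \<and>
     (\<forall>\<tau>. mixed_strategy N K \<tau> \<longrightarrow>
        expected_payoff \<alpha> N K \<tau> \<sigma>B \<le> expected_payoff \<alpha> N K \<sigma>A \<sigma>B) \<and>
     (\<forall>\<tau>. mixed_strategy N K \<tau> \<longrightarrow>
        expected_payoff \<alpha> N K \<tau> \<sigma>A \<le> expected_payoff \<alpha> N K \<sigma>B \<sigma>A)"

definition symmetric_equilibrium :: "real \<Rightarrow> nat \<Rightarrow> nat \<Rightarrow> (nat list \<Rightarrow> real) \<Rightarrow> bool" where
  "symmetric_equilibrium \<alpha> N K \<sigma> \<longleftrightarrow> nash_equilibrium \<alpha> N K \<sigma> \<sigma>"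

definition uniform_marginals :: "nat \<Rightarrow> nat \<Rightarrow> (nat list \<Rightarrow> real) \<Rightarrow> bool" where
  "uniform_marginals N K \<sigma> \<longleftrightarrow>
     K dvd N \<and>
     (\<forall>k<K. \<forall>v. (\<Sum>s\<in>{s\<in>blotto_strats N K. s ! k = v}. \<sigma> s) =
                 (if v \<le> 2 * (N div K) then 1 / real (2 * (N div K) + 1) else 0))"

end

theory Submission
  imports Defs
begin

text \<open>Against an opponent mixing with \<sigma>, the payoff of a pure strategy s splits into a sum over
  battlefields, and the term of battlefield k only depends on the bid s!k and on the marginal law
  of the opponent's bid there. If every marginal is uniform on {0..n} with n = 2N/K, a bid x \<le> n
  wins with probability x/(n+1) and ties with probability 1/(n+1), so s earns
  (N + K\<alpha>/2)/(n+1) whenever all its bids are at most n; a bid x > n earns only 1 \<le> (x + \<alpha>/2)/(n+1)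
  on its battlefield, so no pure strategy does better when \<alpha> \<ge> 0. Since a strategy with uniform
  marginals only plays bids \<le> n, every pure strategy in its support is a best reply to it, which
  makes it a symmetric equilibrium.\<close>

definition battlefield_score :: "real \<Rightarrow> nat \<Rightarrow> nat \<Rightarrow> real" where
  "battlefield_score \<alpha> x y = (if x > y then 1 else 0) + \<alpha> / 2 * (if x = y then 1 else 0)"

definition pure_payoff :: "real \<Rightarrow> nat \<Rightarrow> nat \<Rightarrow> nat list \<Rightarrow> (nat list \<Rightarrow> real) \<Rightarrow> real" where
  "pure_payoff \<alpha> N K s \<sigma> = (\<Sum>t\<in>blotto_strats N K. \<sigma> t * blotto_payoff \<alpha> K s t)"

definition marginal :: "nat \<Rightarrow> nat \<Rightarrow> (nat list \<Rightarrow> real) \<Rightarrow> nat \<Rightarrow> nat \<Rightarrow> real" where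
  "marginal N K \<sigma> k v = (\<Sum>s\<in>{s\<in>blotto_strats N K. s ! k = v}. \<sigma> s)"

lemma blotto_payoff_eq_sum_battlefield_score:
  "blotto_payoff \<alpha> K s t = (\<Sum>k<K. battlefield_score \<alpha> (s ! k) (t ! k))"
  by (simp add: blotto_payoff_def battlefield_score_def)

lemma sum_battlefield_score_atMost:
  "(\<Sum>v\<le>n. battlefield_score \<alpha> x v) = (if x \<le> n then x + \<alpha> / 2 else n + 1)"
  by (induction n) (auto simp: battlefield_score_def)

lemma finite_blotto_strats: "finite (blotto_strats N K)"
proof (rule finite_subset)
  show "blotto_strats N K \<subseteq> {s. set s \<subseteq> {..N} \<and> length s = K}"
    by (auto simp: blotto_strats_def in_set_conv_nth)
  show "finite {s. set s \<subseteq> {..N} \<and> length s = K}"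
    by (rule finite_lists_length_eq) simp
qed

lemma expected_payoff_eq_sum_pure_payoff:
  "expected_payoff \<alpha> N K \<tau> \<sigma> = (\<Sum>s\<in>blotto_strats N K. \<tau> s * pure_payoff \<alpha> N K s \<sigma>)"
  by (simp add: expected_payoff_def pure_payoff_def sum_distrib_left mult.assoc)

lemma expected_payoff_le_of_pure_payoff_le:
  assumes "mixed_strategy N K \<tau>" and "\<And>s. s \<in> blotto_strats N K \<Longrightarrow> pure_payoff \<alpha> N K s \<sigma> \<le> V"
  shows "expected_payoff \<alpha> N K \<tau> \<sigma> \<le> V"
proof -
  have "expected_payoff \<alpha> N K \<tau> \<sigma> \<le> (\<Sum>s\<in>blotto_strats N K. \<tau> s * V)"
    unfolding expected_payoff_eq_sum_pure_payoff
    using assms by (intro sum_mono mult_left_mono) (auto simp: mixed_strategy_def)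
  also have "\<dots> = V"
    using assms(1) by (simp add: mixed_strategy_def flip: sum_distrib_right)
  finally show ?thesis .
qed

lemma expected_payoff_eq_of_pure_payoff_eq:
  assumes "mixed_strategy N K \<tau>"
    and "\<And>s. s \<in> blotto_strats N K \<Longrightarrow> \<tau> s \<noteq> 0 \<Longrightarrow> pure_payoff \<alpha> N K s \<sigma> = V"
  shows "expected_payoff \<alpha> N K \<tau> \<sigma> = V"
proof -
  have "expected_payoff \<alpha> N K \<tau> \<sigma> = (\<Sum>s\<in>blotto_strats N K. \<tau> s * V)"
    unfolding expected_payoff_eq_sum_pure_payoff
    using assms(2) by (intro sum.cong) auto
  also have "\<dots> = V"
    using assms(1) by (simp add: mixed_strategy_def flip: sum_distrib_right)
  finally show ?thesis .
qed

lemma symmetric_equilibriumI: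
  assumes "mixed_strategy N K \<sigma>"
    and "\<And>s. s \<in> blotto_strats N K \<Longrightarrow> pure_payoff \<alpha> N K s \<sigma> \<le> V"
    and "\<And>s. s \<in> blotto_strats N K \<Longrightarrow> \<sigma> s \<noteq> 0 \<Longrightarrow> pure_payoff \<alpha> N K s \<sigma> = V"
  shows "symmetric_equilibrium \<alpha> N K \<sigma>"
  using assms expected_payoff_le_of_pure_payoff_le expected_payoff_eq_of_pure_payoff_eq
  by (simp add: symmetric_equilibrium_def nash_equilibrium_def)

lemma sum_blotto_strats_by_bid:
  assumes "k < K" and "N \<le> B"
  shows "(\<Sum>t\<in>blotto_strats N K. \<sigma> t * f (t ! k)) = (\<Sum>v\<le>B. marginal N K \<sigma> k v * f v)"
proof -
  have "(\<lambda>t. t ! k) ` blotto_strats N K \<subseteq> {..B}"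
    using assms by (auto simp: blotto_strats_def)
  then have "(\<Sum>t\<in>blotto_strats N K. \<sigma> t * f (t ! k))
      = (\<Sum>v\<le>B. \<Sum>t\<in>{t\<in>blotto_strats N K. t ! k = v}. \<sigma> t * f (t ! k))"
    by (rule sum.group[OF finite_blotto_strats finite_atMost, symmetric])
  also have "\<dots> = (\<Sum>v\<le>B. marginal N K \<sigma> k v * f v)"
    by (simp add: marginal_def sum_distrib_right)
  finally show ?thesis .
qed

lemma pure_payoff_eq_sum_marginal:
  assumes "N \<le> B"
  shows "pure_payoff \<alpha> N K s \<sigma> = (\<Sum>k<K. \<Sum>v\<le>B. marginal N K \<sigma> k v * battlefield_score \<alpha> (s ! k) v)"
proof -
  have "pure_payoff \<alpha> N K s \<sigma>
      = (\<Sum>k<K. \<Sum>t\<in>blotto_strats N K. \<sigma> t * battlefield_score \<alpha> (s ! k) (t ! k))"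
    unfolding pure_payoff_def blotto_payoff_eq_sum_battlefield_score sum_distrib_left
    by (rule sum.swap)
  also have "\<dots> = (\<Sum>k<K. \<Sum>v\<le>B. marginal N K \<sigma> k v * battlefield_score \<alpha> (s ! k) v)"
    using assms by (intro sum.cong refl sum_blotto_strats_by_bid) auto
  finally show ?thesis .
qed

lemma marginal_of_uniform_marginals:
  assumes "uniform_marginals N K \<sigma>" and "k < K"
  shows "marginal N K \<sigma> k v = (if v \<le> 2 * (N div K) then 1 / real (2 * (N div K) + 1) else 0)"
  using assms by (simp add: uniform_marginals_def marginal_def)

lemma pure_payoff_of_uniform_marginals:
  assumes "uniform_marginals N K \<sigma>"
  defines "n \<equiv> 2 * (N div K)"
  shows "pure_payoff \<alpha> N K s \<sigma> = (\<Sum>k<K. \<Sum>v\<le>n. battlefield_score \<alpha> (s ! k) v) / (n + 1)"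
proof -
  have "pure_payoff \<alpha> N K s \<sigma>
      = (\<Sum>k<K. \<Sum>v\<le>N + n. (if v \<le> n then battlefield_score \<alpha> (s ! k) v / (n + 1) else 0))"
    unfolding pure_payoff_eq_sum_marginal[of N "N + n", OF le_add1]
    using assms by (intro sum.cong refl) (simp add: marginal_of_uniform_marginals)
  also have "\<dots> = (\<Sum>k<K. \<Sum>v\<le>n. battlefield_score \<alpha> (s ! k) v / (n + 1))"
  proof -
    have "{v \<in> {..N + n}. v \<le> n} = {..n}" by auto
    then show ?thesis by (simp add: sum.inter_filter[symmetric])
  qed
  finally show ?thesis
    by (simp add: sum_divide_distrib)
qed

lemma sum_nth_blotto_strats:
  assumes "s \<in> blotto_strats N K"
  shows "(\<Sum>k<K. real (s ! k)) = real N"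
  using assms
  by (auto simp: blotto_strats_def sum_list_sum_nth atLeast0LessThan simp flip: of_nat_sum)

lemma pure_payoff_le_of_uniform_marginals:
  assumes "uniform_marginals N K \<sigma>" and "s \<in> blotto_strats N K" and "0 \<le> \<alpha>"
  shows "pure_payoff \<alpha> N K s \<sigma> \<le> (N + K * \<alpha> / 2) / real (2 * (N div K) + 1)"
proof -
  have "(\<Sum>k<K. \<Sum>v\<le>2 * (N div K). battlefield_score \<alpha> (s ! k) v) \<le> (\<Sum>k<K. s ! k + \<alpha> / 2)"
    using assms(3) by (intro sum_mono) (simp add: sum_battlefield_score_atMost)
  also have "\<dots> = N + K * \<alpha> / 2"
    using sum_nth_blotto_strats[OF assms(2)] by (simp add: sum.distrib)
  finally show ?thesis
    unfolding pure_payoff_of_uniform_marginals[OF assms(1)] by (simp add: divide_right_mono)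
qed

lemma pure_payoff_eq_of_uniform_marginals:
  assumes "uniform_marginals N K \<sigma>" and "s \<in> blotto_strats N K"
    and "\<And>k. k < K \<Longrightarrow> s ! k \<le> 2 * (N div K)"
  shows "pure_payoff \<alpha> N K s \<sigma> = (N + K * \<alpha> / 2) / real (2 * (N div K) + 1)"
proof -
  have "(\<Sum>k<K. \<Sum>v\<le>2 * (N div K). battlefield_score \<alpha> (s ! k) v) = (\<Sum>k<K. s ! k + \<alpha> / 2)"
    using assms(3) by (intro sum.cong) (simp_all add: sum_battlefield_score_atMost)
  also have "\<dots> = N + K * \<alpha> / 2"
    using sum_nth_blotto_strats[OF assms(2)] by (simp add: sum.distrib)
  finally show ?thesis
    unfolding pure_payoff_of_uniform_marginals[OF assms(1)] by simp
qed

lemma bid_le_of_uniform_marginals: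
  assumes "uniform_marginals N K \<sigma>" and "mixed_strategy N K \<sigma>"
    and "s \<in> blotto_strats N K" and "\<sigma> s \<noteq> 0" and "k < K"
  shows "s ! k \<le> 2 * (N div K)"
proof (rule ccontr)
  assume "\<not> s ! k \<le> 2 * (N div K)"
  then have "marginal N K \<sigma> k (s ! k) = 0"
    using assms(1,5) by (simp add: marginal_of_uniform_marginals)
  moreover have "\<sigma> s \<le> marginal N K \<sigma> k (s ! k)"
    unfolding marginal_def using assms(2,3)
    by (intro member_le_sum) (auto simp: mixed_strategy_def finite_blotto_strats)
  ultimately show False
    using assms(2,4) by (simp add: mixed_strategy_def order.antisym)
qed

theorem symmetric_equilibrium_of_uniform_marginals:
  assumes "mixed_strategy N K \<sigma>" and "uniform_marginals N K \<sigma>" and "0 \<le> \<alpha>"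
  shows "symmetric_equilibrium \<alpha> N K \<sigma>"
proof (rule symmetric_equilibriumI[OF assms(1)])
  fix s assume s: "s \<in> blotto_strats N K"
  with assms(2,3) show "pure_payoff \<alpha> N K s \<sigma> \<le> (N + K * \<alpha> / 2) / real (2 * (N div K) + 1)"
    by (intro pure_payoff_le_of_uniform_marginals)
  assume "\<sigma> s \<noteq> 0"
  with assms(1,2) s show "pure_payoff \<alpha> N K s \<sigma> = (N + K * \<alpha> / 2) / real (2 * (N div K) + 1)"
    by (intro pure_payoff_eq_of_uniform_marginals bid_le_of_uniform_marginals)
qed

definition blotto_6_3_Sa :: "nat list set" where
  "blotto_6_3_Sa = {[2,2,2], [3,3,0], [3,0,3], [0,3,3], [4,1,1], [1,4,1], [1,1,4]}"

definition blotto_6_3_Sb :: "nat list set" where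
  "blotto_6_3_Sb = {[4,2,0], [4,0,2], [2,4,0], [2,0,4], [0,4,2], [0,2,4]}"

definition blotto_6_3_strategy :: "nat list \<Rightarrow> real" where
  "blotto_6_3_strategy s =
     (if s \<in> blotto_6_3_Sa then 1/10 else if s \<in> blotto_6_3_Sb then 1/20 else 0)"

lemma finite_blotto_6_3_Sa: "finite blotto_6_3_Sa"
  by (simp add: blotto_6_3_Sa_def)

lemma finite_blotto_6_3_Sb: "finite blotto_6_3_Sb"
  by (simp add: blotto_6_3_Sb_def)

lemma blotto_6_3_support_subset: "blotto_6_3_Sa \<union> blotto_6_3_Sb \<subseteq> blotto_strats 6 3"
  by (simp add: blotto_6_3_Sa_def blotto_6_3_Sb_def blotto_strats_def less_Suc_eq numeral_3_eq_3)

lemma sum_blotto_6_3_strategy: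
  "(\<Sum>s\<in>{s\<in>blotto_strats 6 3. Q s}. blotto_6_3_strategy s)
     = (\<Sum>s\<in>blotto_6_3_Sa. if Q s then 1/10 else 0)
       + (\<Sum>s\<in>blotto_6_3_Sb. if Q s then 1/20 else 0)"
proof -
  have disjoint: "blotto_6_3_Sa \<inter> blotto_6_3_Sb = {}"
    by (simp add: blotto_6_3_Sa_def blotto_6_3_Sb_def)
  have "(\<Sum>s\<in>blotto_strats 6 3. if Q s then blotto_6_3_strategy s else 0)
      = (\<Sum>s\<in>blotto_6_3_Sa \<union> blotto_6_3_Sb. if Q s then blotto_6_3_strategy s else 0)"
    using blotto_6_3_support_subset
    by (intro sum.mono_neutral_right finite_blotto_strats) (auto simp: blotto_6_3_strategy_def)
  also have "\<dots> = (\<Sum>s\<in>blotto_6_3_Sa. if Q s then 1/10 else 0)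
      + (\<Sum>s\<in>blotto_6_3_Sb. if Q s then 1/20 else 0)"
    using disjoint unfolding sum.union_disjoint[OF finite_blotto_6_3_Sa finite_blotto_6_3_Sb disjoint]
    by (intro arg_cong2[where f = "(+)"] sum.cong) (auto simp: blotto_6_3_strategy_def)
  finally show ?thesis
    by (simp add: sum.inter_filter finite_blotto_strats)
qed

lemma mixed_strategy_blotto_6_3_strategy: "mixed_strategy 6 3 blotto_6_3_strategy"
proof -
  have "(\<Sum>s\<in>blotto_strats 6 3. blotto_6_3_strategy s) = 1"
    using sum_blotto_6_3_strategy[of "\<lambda>_. True"]
    by (simp add: blotto_6_3_Sa_def blotto_6_3_Sb_def)
  moreover have "blotto_6_3_strategy s = 0" if "s \<notin> blotto_strats 6 3" for s
    using that blotto_6_3_support_subset by (auto simp: blotto_6_3_strategy_def)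
  ultimately show ?thesis
    by (simp add: mixed_strategy_def blotto_6_3_strategy_def)
qed

lemma uniform_marginals_blotto_6_3_strategy: "uniform_marginals 6 3 blotto_6_3_strategy"
  unfolding uniform_marginals_def
proof (intro conjI allI impI)
  fix k v :: nat assume "k < 3"
  then have "k = 0 \<or> k = 1 \<or> k = 2" by auto
  moreover have "v = 0 \<or> v = 1 \<or> v = 2 \<or> v = 3 \<or> v = 4 \<or> 4 < v" by auto
  ultimately show "(\<Sum>s\<in>{s\<in>blotto_strats 6 3. s ! k = v}. blotto_6_3_strategy s)
      = (if v \<le> 2 * (6 div 3) then 1 / real (2 * (6 div 3) + 1) else 0)"
    unfolding sum_blotto_6_3_strategy
    by (elim disjE) (simp_all add: blotto_6_3_Sa_def blotto_6_3_Sb_def)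
qed simp

theorem mainTheorem10:
  fixes \<alpha> :: real and \<sigma> :: "nat list \<Rightarrow> real"
  assumes "0 \<le> \<alpha>" and "\<alpha> \<le> 2"
  defines "Sa \<equiv> {[2,2,2], [3,3,0], [3,0,3], [0,3,3], [4,1,1], [1,4,1], [1,1,4]} :: nat list set"
      and "Sb \<equiv> {[4,2,0], [4,0,2], [2,4,0], [2,0,4], [0,4,2], [0,2,4]} :: nat list set"
  assumes "\<And>s. \<sigma> s = (if s \<in> Sa then 1/10 else if s \<in> Sb then 1/20 else 0)"
  shows "uniform_marginals 6 3 \<sigma> \<and> symmetric_equilibrium \<alpha> 6 3 \<sigma>"
proof -
  have "Sa = blotto_6_3_Sa" and "Sb = blotto_6_3_Sb"
    by (simp_all add: Sa_def Sb_def blotto_6_3_Sa_def blotto_6_3_Sb_def)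
  then have "\<sigma> = blotto_6_3_strategy"
    using assms(5) by (simp add: blotto_6_3_strategy_def fun_eq_iff)
  then show ?thesis
    using symmetric_equilibrium_of_uniform_marginals[OF mixed_strategy_blotto_6_3_strategy
        uniform_marginals_blotto_6_3_strategy assms(1)]
      uniform_marginals_blotto_6_3_strategy
    by simp
qed

end
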